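(* Let $A \in \mathbb{R}^{m \times n_A}$ and $B \in \mathbb{R}^{m \times n_B}$, whose columns are unit vectors. Let $0<\delta<1$, and let $S, T$ be sets of columns of $B$ with $f_A(S) \ge f_A(T)$, $f_A(S)>0$ and $|S| \le k$. Let $R$ be a subset of size $\frac{n_B \log(1/\delta)}{k}$ drawn uniformly at random from the columns of $B$ not in $T$. Then $$\mathbb{E}\Big[\max_{v \in R}\big(f_A(T \cup \{v\}) - f_A(T)\big)\Big] \ge (1-\delta)\, \sigma_{\min}(S)\, \frac{\big(f_A(S) - f_A(T)\big)^2}{4k\, f_A(S)}.$$
   Context: For a finite set $V$ of vectors in $\mathbb{R}^m$, $\Pi_V$ is the orthogonal projector onto $\mathrm{span}(V)$ and, for a matrix $M$ with $m$ rows, $f_M(V) = \|\Pi_V M\|_F^2$. For a finite set $V$ of unit vectors, $\sigma_{\min}(V)$ is the smallest squared singular value of the matrix with columns $V$. *)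

theory Defs
  imports "HOL-Analysis.Analysis"
begin

definition orth_proj :: "('a::euclidean_space) set \<Rightarrow> 'a \<Rightarrow> 'a" where
  "orth_proj V x = (THE p. p \<in> span V \<and> (\<forall>y\<in>span V. inner (x - p) y = 0))"

text \<open>f_M(V) = squared Frobenius norm of Pi_V M, written column by column.\<close>
definition fM :: "real^'n^'m \<Rightarrow> (real^'m) set \<Rightarrow> real" where
  "fM M V = (\<Sum>j\<in>UNIV. (norm (orth_proj V (column j M)))\<^sup>2)"

text \<open>Smallest squared singular value of the matrix whose columns are the
  (finitely many) vectors of V: min over unit coefficient vectors x of |Mx|^2.\<close>
definition sigma_min :: "('a::euclidean_space) set \<Rightarrow> real" where
  "sigma_min V = Inf {(norm (\<Sum>v\<in>V. x v *\<^sub>R v))\<^sup>2 | x. (\<Sum>v\<in>V. (x v)\<^sup>2) = 1}"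

definition cols :: "real^'n^'m \<Rightarrow> (real^'m) set" where
  "cols M = {column j M | j. True}"

end

theory Submission
  imports Defs
begin

text \<open>Write \<open>a\<^sub>j\<close> for the columns of \<open>A\<close> and \<open>c\<^sub>j = a\<^sub>j - \<Pi>\<^sub>T a\<^sub>j\<close>. Adding a vector \<open>v\<close> with
  \<open>|v| \<le> 1\<close> to \<open>T\<close> increases \<open>f\<^sub>A\<close> by at least \<open>\<Sum>\<^sub>j \<langle>c\<^sub>j, v\<rangle>\<^sup>2\<close>. Summed over \<open>v \<in> S\<close>,
  the definition of \<open>\<sigma>\<^sub>m\<^sub>i\<^sub>n(S)\<close> bounds this below by \<open>\<sigma>\<^sub>m\<^sub>i\<^sub>n(S) \<Sum>\<^sub>j |\<Pi>\<^sub>S c\<^sub>j|\<^sup>2\<close>, and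
  Cauchy-Schwarz gives \<open>\<Sum>\<^sub>j |\<Pi>\<^sub>S c\<^sub>j|\<^sup>2 \<ge> (f\<^sub>A(S) - f\<^sub>A(T))\<^sup>2 / (4 f\<^sub>A(S))\<close>.

  For the random set \<open>R\<close>, the largest gain on \<open>R\<close> is at least the mean gain on \<open>R \<inter> (S - T)\<close>; by
  symmetry the expected mean is \<open>P(R \<inter> (S - T) \<noteq> {}) / |S - T|\<close> times the total gain on \<open>S - T\<close>.
  Finally \<open>P(R \<inter> (S - T) = {}) \<le> exp(-r s/n) \<le> 1 - (1 - \<delta>) s/k\<close> for \<open>s = |S - T| \<le> k\<close>, by the
  choice of \<open>r\<close> and convexity of \<open>exp\<close>. The columns of \<open>A\<close> need not be unit vectors.\<close>

lemma orth_proj_characterization: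
  fixes V :: "'a::euclidean_space set"
  shows "orth_proj V x \<in> span V \<and> (\<forall>y\<in>span V. inner (x - orth_proj V x) y = 0)"
proof -
  obtain p z where p: "p \<in> span V" "\<And>w. w \<in> span V \<Longrightarrow> orthogonal z w" "x = p + z"
    using orthogonal_subspace_decomp_exists by blast
  have p_char: "p \<in> span V \<and> (\<forall>y\<in>span V. inner (x - p) y = 0)"
    using p by (simp add: orthogonal_def)
  have "q = p" if q: "q \<in> span V \<and> (\<forall>y\<in>span V. inner (x - q) y = 0)" for q
  proof -
    have "p - q \<in> span V" using q p by (simp add: span_diff)
    then have "inner (x - q) (p - q) = 0" "inner (x - p) (p - q) = 0" using q p_char by auto
    then have "inner (p - q) (p - q) = 0" by (simp add: inner_diff_left inner_diff_right)
    then show ?thesis by simp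
  qed
  with p_char show ?thesis
    unfolding orth_proj_def by (rule theI)
qed

lemma orth_proj_in_span: "orth_proj V x \<in> span V"
  using orth_proj_characterization by blast

lemma orth_proj_residual_orthogonal: "y \<in> span V \<Longrightarrow> inner (x - orth_proj V x) y = 0"
  using orth_proj_characterization by blast

lemma inner_orth_proj: "y \<in> span V \<Longrightarrow> inner (orth_proj V x) y = inner x y"
  using orth_proj_residual_orthogonal[of y V x] by (simp add: inner_diff_left)

lemma norm_orth_proj_squared: "(norm (orth_proj V x))\<^sup>2 = inner x (orth_proj V x)"
  using inner_orth_proj[OF orth_proj_in_span, of V x x] by (simp add: power2_norm_eq_inner)

lemma orth_proj_empty: "orth_proj {} x = 0"
  using orth_proj_in_span[of "{}" x] by simp

lemma norm_orth_proj_residual_le: "norm (x - orth_proj V x) \<le> norm x"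
proof -
  have "orthogonal (orth_proj V x) (x - orth_proj V x)"
    using orth_proj_residual_orthogonal[OF orth_proj_in_span]
    by (simp add: orthogonal_def inner_commute)
  from norm_add_Pythagorean[OF this]
  have "(norm x)\<^sup>2 = (norm (orth_proj V x))\<^sup>2 + (norm (x - orth_proj V x))\<^sup>2"
    by simp
  then have "(norm (x - orth_proj V x))\<^sup>2 \<le> (norm x)\<^sup>2"
    using zero_le_power2[of "norm (orth_proj V x)"] by linarith
  then show ?thesis
    by (rule power2_le_imp_le) simp
qed

text \<open>For \<open>p = \<Pi>\<^sub>T a\<close> and \<open>q = \<Pi>\<^bsub>T \<union> {v}\<^esub> a\<close> the gain is \<open>|q - p|\<^sup>2\<close>; test \<open>q - p\<close>
  against \<open>w = v - \<Pi>\<^sub>T v \<in> span (T \<union> {v})\<close>, for which \<open>\<langle>q - p, w\<rangle> = \<langle>a - p, v\<rangle>\<close> and \<open>|w| \<le> 1\<close>.\<close>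
lemma norm_orth_proj_insert_gain:
  fixes a v :: "'a::euclidean_space"
  assumes "norm v \<le> 1"
  shows "(inner (a - orth_proj T a) v)\<^sup>2
         \<le> (norm (orth_proj (T \<union> {v}) a))\<^sup>2 - (norm (orth_proj T a))\<^sup>2"
proof -
  define p where "p = orth_proj T a"
  define q where "q = orth_proj (T \<union> {v}) a"
  define w where "w = v - orth_proj T v"
  have span_mono': "span T \<subseteq> span (T \<union> {v})" by (rule span_mono) blast
  have p_span: "p \<in> span T" unfolding p_def by (rule orth_proj_in_span)
  have p_span': "p \<in> span (T \<union> {v})" using p_span span_mono' by blast
  have w_span: "w \<in> span (T \<union> {v})"
    unfolding w_def using orth_proj_in_span[of T v] span_mono'
    by (intro span_diff) (auto intro: span_base)
  have "inner q p = inner a p" "inner a p = inner p p"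
    using inner_orth_proj[OF p_span', of a] inner_orth_proj[OF p_span, of a]
    unfolding p_def q_def by (simp_all add: inner_commute)
  then have gain: "(norm q)\<^sup>2 - (norm p)\<^sup>2 = (norm (q - p))\<^sup>2"
    unfolding power2_norm_eq_inner by (simp add: inner_diff_left inner_diff_right inner_commute)
  have wp: "inner w p = 0"
    unfolding w_def by (rule orth_proj_residual_orthogonal[OF p_span])
  have "inner a (orth_proj T v) = inner p (orth_proj T v)"
    using inner_orth_proj[OF orth_proj_in_span, of T a v] unfolding p_def by (simp add: inner_commute)
  also have "\<dots> = inner p v"
    using wp unfolding w_def by (simp add: inner_diff_right inner_commute)
  finally have key: "inner (q - p) w = inner (a - p) v"
    using inner_orth_proj[OF w_span, of a] wp
    unfolding q_def w_def by (simp add: inner_diff_left inner_diff_right inner_commute)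
  have "norm w \<le> 1"
    using norm_orth_proj_residual_le[of v T] assms unfolding w_def by linarith
  then have "(norm w)\<^sup>2 \<le> 1" by (simp add: power_le_one)
  have "(inner (q - p) w)\<^sup>2 \<le> (norm (q - p) * norm w)\<^sup>2"
    using power_mono[OF Cauchy_Schwarz_ineq2[of "q - p" w] abs_ge_zero, of 2] by simp
  also have "\<dots> \<le> (norm (q - p))\<^sup>2"
    using \<open>(norm w)\<^sup>2 \<le> 1\<close> by (simp add: power_mult_distrib mult_left_le)
  finally have "(inner (a - p) v)\<^sup>2 \<le> (norm q)\<^sup>2 - (norm p)\<^sup>2"
    unfolding gain key .
  then show ?thesis unfolding p_def q_def .
qed

lemma sigma_min_le:
  fixes S :: "'a::euclidean_space set"
  assumes "(\<Sum>v\<in>S. (x v)\<^sup>2) = 1"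
  shows "sigma_min S \<le> (norm (\<Sum>v\<in>S. x v *\<^sub>R v))\<^sup>2"
  unfolding sigma_min_def
  by (rule cInf_lower) (use assms in \<open>auto intro!: bdd_belowI[where m = 0]\<close>)

lemma sigma_min_nonneg:
  fixes S :: "'a::euclidean_space set"
  assumes "finite S" "S \<noteq> {}"
  shows "0 \<le> sigma_min S"
proof -
  obtain v0 where "v0 \<in> S" using assms(2) by blast
  then have "(\<Sum>v\<in>S. (if v = v0 then 1 else 0 :: real)\<^sup>2) = 1"
    using assms(1) by (simp add: if_distrib[of "\<lambda>t. t\<^sup>2"] cong: if_cong)
  then show ?thesis
    unfolding sigma_min_def by (intro cInf_greatest) auto
qed

lemma sigma_min_mult_sum_squares_le:
  fixes S :: "'a::euclidean_space set"
  assumes "finite S"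
  shows "sigma_min S * (\<Sum>v\<in>S. (x v)\<^sup>2) \<le> (norm (\<Sum>v\<in>S. x v *\<^sub>R v))\<^sup>2"
proof (cases "\<forall>v\<in>S. x v = 0")
  case True
  then show ?thesis by simp
next
  case False
  define X where "X = (\<Sum>v\<in>S. (x v)\<^sup>2)"
  obtain v where "v \<in> S" "x v \<noteq> 0" using False by blast
  then have "(x v)\<^sup>2 \<le> X"
    unfolding X_def by (intro member_le_sum) (simp_all add: assms)
  with \<open>x v \<noteq> 0\<close> have "0 < X" by (meson less_le_trans zero_less_power2)
  then have "(\<Sum>v\<in>S. (x v / sqrt X)\<^sup>2) = 1"
    by (simp add: power_divide sum_divide_distrib[symmetric] X_def)
  then have "sigma_min S \<le> (norm (\<Sum>v\<in>S. (x v / sqrt X) *\<^sub>R v))\<^sup>2"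
    by (rule sigma_min_le)
  also have "(\<Sum>v\<in>S. (x v / sqrt X) *\<^sub>R v) = (1 / sqrt X) *\<^sub>R (\<Sum>v\<in>S. x v *\<^sub>R v)"
    by (simp add: scaleR_sum_right divide_inverse mult.commute)
  also have "(norm ((1 / sqrt X) *\<^sub>R (\<Sum>v\<in>S. x v *\<^sub>R v)))\<^sup>2 = (norm (\<Sum>v\<in>S. x v *\<^sub>R v))\<^sup>2 / X"
    using \<open>0 < X\<close> by (simp add: power_mult_distrib power_divide)
  finally show ?thesis using \<open>0 < X\<close> unfolding X_def[symmetric] by (simp add: pos_le_divide_eq)
qed

text \<open>Writing \<open>\<Pi>\<^sub>S c = \<Sum>\<^sub>v x\<^sub>v v\<close>, Cauchy-Schwarz gives
  \<open>|\<Pi>\<^sub>S c|\<^sup>2 = \<Sum>\<^sub>v x\<^sub>v \<langle>c, v\<rangle> \<le> |x| (\<Sum>\<^sub>v \<langle>c, v\<rangle>\<^sup>2)\<^sup>1\<^sup>/\<^sup>2\<close>, while \<open>\<sigma>\<^sub>m\<^sub>i\<^sub>n(S) |x|\<^sup>2 \<le> |\<Pi>\<^sub>S c|\<^sup>2\<close>.\<close>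
lemma sigma_min_mult_norm_orth_proj_le:
  fixes S :: "'a::euclidean_space set"
  assumes fin: "finite S"
  shows "sigma_min S * (norm (orth_proj S c))\<^sup>2 \<le> (\<Sum>v\<in>S. (inner c v)\<^sup>2)"
proof (cases "orth_proj S c = 0")
  case True
  then show ?thesis by (simp add: sum_nonneg)
next
  case False
  define \<sigma> where "\<sigma> = sigma_min S"
  define N where "N = (norm (orth_proj S c))\<^sup>2"
  define Q where "Q = (\<Sum>v\<in>S. (inner c v)\<^sup>2)"
  have "S \<noteq> {}" using False orth_proj_in_span[of S c] by auto
  with fin have "0 \<le> \<sigma>" unfolding \<sigma>_def by (rule sigma_min_nonneg)
  obtain x where x: "orth_proj S c = (\<Sum>v\<in>S. x v *\<^sub>R v)"
    using orth_proj_in_span[of S c] span_finite[OF fin] by auto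
  define X where "X = (\<Sum>v\<in>S. (x v)\<^sup>2)"
  have "0 < N" using False unfolding N_def by simp
  have "N = inner c (orth_proj S c)" unfolding N_def by (rule norm_orth_proj_squared)
  also have "\<dots> = (\<Sum>v\<in>S. x v * inner c v)" unfolding x by (simp add: inner_sum_right)
  finally have "N\<^sup>2 \<le> X * Q"
    unfolding X_def Q_def by (simp add: Cauchy_Schwarz_ineq_sum)
  then have "\<sigma> * N\<^sup>2 \<le> \<sigma> * (X * Q)" using \<open>0 \<le> \<sigma>\<close> by (rule mult_left_mono)
  also have "\<dots> = \<sigma> * X * Q" by simp
  also have "\<dots> \<le> N * Q"
    using sigma_min_mult_sum_squares_le[OF fin, of x] unfolding \<sigma>_def X_def N_def x
    by (rule mult_right_mono) (simp add: Q_def sum_nonneg)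
  finally have "\<sigma> * N \<le> Q" using \<open>0 < N\<close> by (simp add: power2_eq_square)
  then show ?thesis unfolding \<sigma>_def N_def Q_def .
qed

lemma norm_orth_proj_sq_diff_le:
  fixes S T :: "'a::euclidean_space set"
  shows "(norm (orth_proj S a))\<^sup>2 - (norm (orth_proj T a))\<^sup>2
         \<le> 2 * (norm (orth_proj S a) * norm (orth_proj S (a - orth_proj T a)))"
proof -
  define ps where "ps = orth_proj S a"
  define pt where "pt = orth_proj T a"
  define d where "d = a - pt"
  have "inner ps d = (norm ps)\<^sup>2 - inner ps pt"
    unfolding d_def ps_def norm_orth_proj_squared by (simp add: inner_diff_right inner_commute)
  moreover have "inner ps pt \<le> ((norm ps)\<^sup>2 + (norm pt)\<^sup>2) / 2"
    using norm_cauchy_schwarz[of ps pt] sum_squares_bound[of "norm ps" "norm pt"]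
    by (simp add: power2_eq_square)
  moreover have "inner ps d \<le> norm (orth_proj S d) * norm ps"
    using inner_orth_proj[OF orth_proj_in_span, of S d a] norm_cauchy_schwarz[of "orth_proj S d" ps]
    unfolding ps_def by (simp add: inner_commute)
  ultimately show ?thesis
    unfolding ps_def[symmetric] pt_def[symmetric] d_def[symmetric] by (simp add: mult.commute)
qed

lemma fM_diff_squared_le:
  fixes A :: "real^'n^'m"
  assumes "fM A T \<le> fM A S" "0 < fM A S"
  shows "(fM A S - fM A T)\<^sup>2 / (4 * fM A S)
         \<le> (\<Sum>j\<in>UNIV. (norm (orth_proj S (column j A - orth_proj T (column j A))))\<^sup>2)"
    (is "_ \<le> ?G")
proof -
  let ?Y = "\<Sum>j\<in>UNIV. norm (orth_proj S (column j A)) *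
              norm (orth_proj S (column j A - orth_proj T (column j A)))"
  have "fM A S - fM A T \<le> 2 * ?Y"
    unfolding fM_def sum_subtractf[symmetric] sum_distrib_left
    by (rule sum_mono) (rule norm_orth_proj_sq_diff_le)
  then have "(fM A S - fM A T)\<^sup>2 \<le> 4 * ?Y\<^sup>2"
    using assms(1) power_mono[of "fM A S - fM A T" "2 * ?Y" 2] by (simp add: power_mult_distrib)
  also have "?Y\<^sup>2 \<le> fM A S * ?G"
    unfolding fM_def by (rule Cauchy_Schwarz_ineq_sum)
  finally show ?thesis
    using assms(2) by (simp add: pos_divide_le_eq mult.commute mult.left_commute)
qed

lemma fM_empty: "fM A {} = 0"
  unfolding fM_def orth_proj_empty by simp

lemma fM_insert_gain_ge:
  fixes A :: "real^'n^'m"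
  assumes "norm v \<le> 1"
  shows "(\<Sum>j\<in>UNIV. (inner (column j A - orth_proj T (column j A)) v)\<^sup>2)
         \<le> fM A (T \<union> {v}) - fM A T"
proof -
  have "(\<Sum>j\<in>UNIV. (inner (column j A - orth_proj T (column j A)) v)\<^sup>2)
      \<le> (\<Sum>j\<in>UNIV. (norm (orth_proj (T \<union> {v}) (column j A)))\<^sup>2
                      - (norm (orth_proj T (column j A)))\<^sup>2)"
    using assms by (intro sum_mono norm_orth_proj_insert_gain)
  then show ?thesis unfolding fM_def sum_subtractf .
qed

lemma sigma_min_mult_fM_gap_le_sum_gains:
  fixes A :: "real^'n^'m"
  assumes "finite S" "\<forall>v\<in>S. norm v \<le> 1" "fM A T \<le> fM A S" "0 < fM A S"
  shows "sigma_min S * (fM A S - fM A T)\<^sup>2 / (4 * fM A S)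
         \<le> (\<Sum>v\<in>S. fM A (T \<union> {v}) - fM A T)"
proof -
  let ?c = "\<lambda>j. column j A - orth_proj T (column j A)"
  have "S \<noteq> {}" using assms(4) fM_empty[of A] by auto
  with assms(1) have "0 \<le> sigma_min S" by (rule sigma_min_nonneg)
  have "sigma_min S * (fM A S - fM A T)\<^sup>2 / (4 * fM A S)
      = sigma_min S * ((fM A S - fM A T)\<^sup>2 / (4 * fM A S))"
    by simp
  also have "\<dots> \<le> sigma_min S * (\<Sum>j\<in>UNIV. (norm (orth_proj S (?c j)))\<^sup>2)"
    by (rule mult_left_mono[OF fM_diff_squared_le[OF assms(3,4)] \<open>0 \<le> sigma_min S\<close>])
  also have "\<dots> \<le> (\<Sum>j\<in>UNIV. \<Sum>v\<in>S. (inner (?c j) v)\<^sup>2)"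
    unfolding sum_distrib_left
    by (rule sum_mono) (rule sigma_min_mult_norm_orth_proj_le[OF assms(1)])
  also have "\<dots> = (\<Sum>v\<in>S. \<Sum>j\<in>UNIV. (inner (?c j) v)\<^sup>2)"
    by (rule sum.swap)
  also have "\<dots> \<le> (\<Sum>v\<in>S. fM A (T \<union> {v}) - fM A T)"
    using assms(2) by (intro sum_mono fM_insert_gain_ge) simp
  finally show ?thesis .
qed

definition uniform_share :: "'a set set \<Rightarrow> 'a set \<Rightarrow> 'a \<Rightarrow> real" where
  "uniform_share F S' v = (\<Sum>R\<in>F. if v \<in> R then 1 / real (card (R \<inter> S')) else 0)"

lemma uniform_share_subsets_eq:
  fixes r :: nat
  assumes "S' \<subseteq> U" "v \<in> S'" "w \<in> S'"
  defines "F \<equiv> {R. R \<subseteq> U \<and> card R = r}"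
  shows "uniform_share F S' v = uniform_share F S' w"
proof -
  let ?t = "Transposition.transpose v w"
  have t_U: "?t ` U = U" and t_S': "?t ` S' = S'"
    using assms(1-3) by (auto intro!: transpose_image_eq)
  have "(`) ?t ` F \<subseteq> F"
    using t_U by (auto simp: F_def card_image image_mono)
  then have "bij_betw ((`) ?t) F F"
    by (intro bij_betw_byWitness[where f' = "(`) ?t"]) (simp_all add: image_image)
  then have "uniform_share F S' w
      = (\<Sum>R\<in>F. if w \<in> ?t ` R then 1 / real (card (?t ` R \<inter> S')) else 0)"
    unfolding uniform_share_def by (rule sum.reindex_bij_betw[symmetric])
  also have "\<dots> = uniform_share F S' v"
    unfolding uniform_share_def
  proof (rule sum.cong[OF refl])
    fix R :: "'a set"
    have "?t ` R \<inter> S' = ?t ` (R \<inter> S')"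
      using t_S' by (simp add: image_Int)
    then have "card (?t ` R \<inter> S') = card (R \<inter> S')"
      by (simp add: card_image)
    moreover have "w \<in> ?t ` R \<longleftrightarrow> v \<in> R"
      by (simp add: in_transpose_image_iff)
    ultimately show "(if w \<in> ?t ` R then 1 / real (card (?t ` R \<inter> S')) else 0)
        = (if v \<in> R then 1 / real (card (R \<inter> S')) else 0)"
      by simp
  qed
  finally show ?thesis ..
qed

lemma sum_mean_eq_sum_uniform_share:
  fixes g :: "'a \<Rightarrow> real"
  assumes "finite S'"
  shows "(\<Sum>R\<in>F. (\<Sum>v\<in>R \<inter> S'. g v) / real (card (R \<inter> S')))
         = (\<Sum>v\<in>S'. g v * uniform_share F S' v)"
proof -
  have "(\<Sum>v\<in>R \<inter> S'. g v) / real (card (R \<inter> S'))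
      = (\<Sum>v\<in>S'. if v \<in> R then g v / real (card (R \<inter> S')) else 0)" for R
  proof -
    have "R \<inter> S' = {v\<in>S'. v \<in> R}" by auto
    then show ?thesis
      using sum.inter_filter[OF assms, of "\<lambda>v. g v / real (card (R \<inter> S'))" "\<lambda>v. v \<in> R"]
      by (simp add: sum_divide_distrib)
  qed
  then show ?thesis
    unfolding uniform_share_def
    by (simp add: sum.swap[of _ F] sum_distrib_left if_distrib cong: if_cong)
qed

lemma sum_uniform_share:
  assumes "finite F" "finite S'"
  shows "(\<Sum>v\<in>S'. uniform_share F S' v) = real (card {R\<in>F. R \<inter> S' \<noteq> {}})"
proof -
  have "(\<Sum>v\<in>S'. uniform_share F S' v)
      = (\<Sum>R\<in>F. real (card (R \<inter> S')) / real (card (R \<inter> S')))"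
    using sum_mean_eq_sum_uniform_share[OF assms(2), where g = "\<lambda>_. 1" and F = F] by simp
  also have "\<dots> = (\<Sum>R\<in>F. if R \<inter> S' \<noteq> {} then 1 else 0)"
    using assms(2) by (intro sum.cong) auto
  also have "\<dots> = real (card {R\<in>F. R \<inter> S' \<noteq> {}})"
    using sum.inter_filter[OF assms(1), of "\<lambda>_. 1::real" "\<lambda>R. R \<inter> S' \<noteq> {}"] by simp
  finally show ?thesis .
qed

lemma mean_le_Max:
  fixes g :: "'a \<Rightarrow> real"
  assumes "finite R" "R \<noteq> {}" "\<And>v. v \<in> R \<Longrightarrow> 0 \<le> g v"
  shows "(\<Sum>v\<in>R \<inter> S'. g v) / real (card (R \<inter> S')) \<le> Max (g ` R)"
proof -
  have le_Max: "g v \<le> Max (g ` R)" if "v \<in> R" for v using assms(1) that by auto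
  show ?thesis
  proof (cases "R \<inter> S' = {}")
    case True
    obtain v where "v \<in> R" using assms(2) by auto
    then show ?thesis using le_Max[of v] assms(3)[of v] True by auto
  next
    case False
    have "(\<Sum>v\<in>R \<inter> S'. g v) \<le> real (card (R \<inter> S')) * Max (g ` R)"
      by (rule sum_bounded_above) (use le_Max in auto)
    moreover have "0 < card (R \<inter> S')" using False assms(1) by (simp add: card_gt_0_iff)
    ultimately show ?thesis by (simp add: divide_le_eq mult.commute)
  qed
qed

text \<open>Bound \<open>Max (g ` R)\<close> below by the mean of \<open>g\<close> over \<open>R \<inter> S'\<close> (which is \<open>0\<close> if
  \<open>R \<inter> S' = {}\<close>); summed over \<open>R\<close>, each \<open>v \<in> S'\<close> receives the weight \<open>uniform_share F S' v\<close>,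
  which by symmetry does not depend on \<open>v\<close>.\<close>
lemma sum_Max_subsets_ge:
  fixes g :: "'a \<Rightarrow> real"
  assumes fin: "finite U" and "S' \<subseteq> U" and g_nonneg: "\<And>v. v \<in> U \<Longrightarrow> 0 \<le> g v"
    and "1 \<le> r"
  defines "F \<equiv> {R. R \<subseteq> U \<and> card R = r}"
  shows "real (card {R\<in>F. R \<inter> S' \<noteq> {}}) / real (card S') * (\<Sum>v\<in>S'. g v)
         \<le> (\<Sum>R\<in>F. Max (g ` R))"
proof -
  have fin_F: "finite F" unfolding F_def using fin by (auto intro: finite_subset[of _ "Pow U"])
  have fin_S': "finite S'" using fin \<open>S' \<subseteq> U\<close> finite_subset by blast
  have "real (card {R\<in>F. R \<inter> S' \<noteq> {}}) / real (card S') * (\<Sum>v\<in>S'. g v)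
      = (\<Sum>v\<in>S'. g v * uniform_share F S' v)"
  proof (cases "S' = {}")
    case False
    then obtain v0 where v0: "v0 \<in> S'" by auto
    have share_eq: "uniform_share F S' v = uniform_share F S' v0" if "v \<in> S'" for v
      unfolding F_def using \<open>S' \<subseteq> U\<close> that v0 by (rule uniform_share_subsets_eq)
    then have "real (card {R\<in>F. R \<inter> S' \<noteq> {}}) = real (card S') * uniform_share F S' v0"
      using sum_uniform_share[OF fin_F fin_S'] by simp
    then show ?thesis
      using share_eq False fin_S' by (simp add: sum_distrib_right mult.commute)
  qed simp
  also have "\<dots> = (\<Sum>R\<in>F. (\<Sum>v\<in>R \<inter> S'. g v) / real (card (R \<inter> S')))"
    by (rule sum_mean_eq_sum_uniform_share[OF fin_S', symmetric])
  also have "\<dots> \<le> (\<Sum>R\<in>F. Max (g ` R))"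
  proof (rule sum_mono)
    fix R assume "R \<in> F"
    then have "R \<subseteq> U" "card R = r" unfolding F_def by auto
    then have "finite R" "R \<noteq> {}" using fin finite_subset \<open>1 \<le> r\<close> by auto
    with \<open>R \<subseteq> U\<close> show "(\<Sum>v\<in>R \<inter> S'. g v) / real (card (R \<inter> S')) \<le> Max (g ` R)"
      using g_nonneg by (intro mean_le_Max) auto
  qed
  finally show ?thesis .
qed

lemma choose_pred_eq:
  assumes "1 \<le> m"
  shows "real ((m - 1) choose r) = real (m choose r) * (1 - real r / real m)"
proof (cases "r \<le> m")
  case True
  have "real (m - r) * real (m choose r) = real m * real ((m - 1) choose r)"
    using binomial_absorb_comp[of m r] by (metis of_nat_mult)
  then show ?thesis using True assms by (simp add: field_simps of_nat_diff)
qed (simp add: binomial_eq_0)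

lemma choose_diff_le_exp:
  fixes n s r :: nat
  assumes "s \<le> n"
  shows "real ((n - s) choose r) \<le> real (n choose r) * exp (- (real r * real s / real n))"
  using assms
proof (induction s)
  case 0
  then show ?case by simp
next
  case (Suc s)
  define m where "m = n - s"
  have "1 \<le> m" "m \<le> n" "n - Suc s = m - 1" using Suc.prems unfolding m_def by auto
  then have "real ((n - Suc s) choose r) = real (m choose r) * (1 - real r / real m)"
    using choose_pred_eq by simp
  also have "\<dots> \<le> real (m choose r) * exp (- (real r / real n))"
  proof (rule mult_left_mono)
    have "1 - real r / real m \<le> 1 - real r / real n"
      using \<open>1 \<le> m\<close> \<open>m \<le> n\<close> by (simp add: frac_le)
    also have "\<dots> \<le> exp (- (real r / real n))"
      using exp_ge_add_one_self[of "- (real r / real n)"] by simp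
    finally show "1 - real r / real m \<le> exp (- (real r / real n))" .
  qed simp
  also have "\<dots> \<le> real (n choose r) * exp (- (real r * real s / real n)) * exp (- (real r / real n))"
    using Suc unfolding m_def by (intro mult_right_mono) auto
  also have "\<dots> = real (n choose r) * exp (- (real r * real (Suc s) / real n))"
  proof -
    have "- (real r * real s / real n) + - (real r / real n) = - (real r * real (Suc s) / real n)"
      by (simp add: add_divide_distrib[symmetric] algebra_simps)
    then show ?thesis by (simp only: mult.assoc exp_add[symmetric])
  qed
  finally show ?case .
qed

text \<open>With \<open>t = s/k\<close> and \<open>\<delta> = e\<^sup>-\<^sup>L\<close>, convexity of \<open>exp\<close> gives \<open>e\<^sup>-\<^sup>t\<^sup>L \<le> 1 - t (1 - \<delta>)\<close>.\<close>
lemma choose_diff_choose_ge: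
  fixes n s r k :: nat and \<delta> :: real
  assumes "1 \<le> s" "s \<le> k" "s \<le> n" "0 < \<delta>" "\<delta> < 1"
    and r_ge: "real n * ln (1 / \<delta>) / real k \<le> real r"
  shows "real (n choose r) * ((1 - \<delta>) * real s / real k)
         \<le> real (n choose r) - real ((n - s) choose r)"
proof -
  define L where "L = ln (1 / \<delta>)"
  define t where "t = real s / real k"
  have "0 < n" "0 < k" using assms by auto
  have "exp (- L) = \<delta>" unfolding L_def using assms by (simp add: ln_div)
  have t: "0 \<le> t" "t \<le> 1" unfolding t_def using assms by auto
  have "real n * L \<le> real r * real k"
    using r_ge \<open>0 < k\<close> unfolding L_def by (simp add: divide_le_eq)
  then have "real s * (real n * L) \<le> real s * (real r * real k)" by (intro mult_left_mono) auto
  then have "t * L \<le> real r * real s / real n"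
    unfolding t_def using \<open>0 < n\<close> \<open>0 < k\<close> by (simp add: field_simps)
  then have "exp (- (real r * real s / real n)) \<le> exp (- (t * L))" by simp
  also have "\<dots> \<le> 1 - t * (1 - \<delta>)"
    using convex_onD[OF exp_convex, of t 0 "- L"] t \<open>exp (- L) = \<delta>\<close> by (simp add: algebra_simps)
  finally have "real ((n - s) choose r) \<le> real (n choose r) * (1 - t * (1 - \<delta>))"
    using choose_diff_le_exp[OF \<open>s \<le> n\<close>, of r] by (meson mult_left_mono of_nat_0_le_iff order_trans)
  then show ?thesis unfolding t_def by (simp add: algebra_simps)
qed

lemma card_subsets_meeting:
  assumes "finite U" "S' \<subseteq> U"
  shows "real (card {R. R \<subseteq> U \<and> card R = r \<and> R \<inter> S' \<noteq> {}})
         = real (card U choose r) - real ((card U - card S') choose r)"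
proof -
  let ?F = "{R. R \<subseteq> U \<and> card R = r}"
  have "finite S'" using assms finite_subset by blast
  have "{R\<in>?F. R \<inter> S' = {}} = {R. R \<subseteq> U - S' \<and> card R = r}" by auto
  then have "card {R\<in>?F. R \<inter> S' = {}} = (card U - card S') choose r"
    using n_subsets[of "U - S'" r] assms card_Diff_subset[OF \<open>finite S'\<close> assms(2)] by simp
  moreover have "card ?F = card {R\<in>?F. R \<inter> S' \<noteq> {}} + card {R\<in>?F. R \<inter> S' = {}}"
    using assms(1) by (subst card_Un_disjoint[symmetric]) (auto intro: arg_cong[where f = card])
  moreover have "card ?F = card U choose r" by (rule n_subsets[OF assms(1)])
  ultimately show ?thesis by simp
qed

lemma average_Max_subsets_ge:
  fixes g :: "'a \<Rightarrow> real" and \<delta> :: real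
  assumes fin: "finite U" and S'U: "S' \<subseteq> U" and "card S' \<le> k"
    and g_nonneg: "\<And>v. v \<in> U \<Longrightarrow> 0 \<le> g v"
    and "1 \<le> r" "r \<le> card U" "0 < \<delta>" "\<delta> < 1"
    and r_ge: "real (card U) * ln (1 / \<delta>) / real k \<le> real r"
  defines "F \<equiv> {R. R \<subseteq> U \<and> card R = r}"
  shows "(1 - \<delta>) / real k * (\<Sum>v\<in>S'. g v) \<le> (\<Sum>R\<in>F. Max (g ` R)) / real (card F)"
proof (cases "S' = {}")
  case True
  then show ?thesis
    using sum_Max_subsets_ge[OF fin S'U g_nonneg \<open>1 \<le> r\<close>] unfolding F_def by simp
next
  case False
  define n where "n = card U"
  define s where "s = card S'"
  define hit where "hit = real (card {R\<in>F. R \<inter> S' \<noteq> {}})"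
  have "1 \<le> s" unfolding s_def using False fin S'U by (simp add: Suc_le_eq card_gt_0_iff finite_subset)
  have "s \<le> n" unfolding s_def n_def by (rule card_mono[OF fin S'U])
  have "card F = n choose r" "0 < n choose r"
    unfolding F_def n_def using n_subsets[OF fin] \<open>r \<le> card U\<close> by simp_all
  have "hit = real (n choose r) - real ((n - s) choose r)"
    unfolding hit_def F_def n_def s_def using card_subsets_meeting[OF fin S'U] by simp
  then have "real (n choose r) * ((1 - \<delta>) * real s / real k) \<le> hit"
    using choose_diff_choose_ge[OF \<open>1 \<le> s\<close> _ \<open>s \<le> n\<close> \<open>0 < \<delta>\<close> \<open>\<delta> < 1\<close>, of k r]
      \<open>card S' \<le> k\<close> r_ge unfolding s_def n_def by simp
  then have "real (n choose r) * ((1 - \<delta>) / real k) \<le> hit / real s"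
    using \<open>1 \<le> s\<close> by (simp add: field_simps)
  then have "real (n choose r) * ((1 - \<delta>) / real k) * (\<Sum>v\<in>S'. g v) \<le> hit / real s * (\<Sum>v\<in>S'. g v)"
    using g_nonneg S'U by (intro mult_right_mono sum_nonneg) auto
  also have "\<dots> \<le> (\<Sum>R\<in>F. Max (g ` R))"
    unfolding hit_def s_def F_def by (rule sum_Max_subsets_ge[OF fin S'U g_nonneg \<open>1 \<le> r\<close>])
  finally show ?thesis
    using \<open>card F = n choose r\<close> \<open>0 < n choose r\<close>
    by (simp add: pos_le_divide_eq mult.commute mult.left_commute)
qed

lemma cols_eq_range: "cols M = range (\<lambda>j. column j M)"
  unfolding cols_def by auto

lemma finite_cols: "finite (cols M)"
  unfolding cols_eq_range by simp

lemma card_cols_le: "card (cols (M :: real^'n^'m)) \<le> CARD('n)"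
  unfolding cols_eq_range by (rule card_image_le) simp

lemma nat_ceiling_sample_size:
  fixes \<delta> :: real
  assumes "n \<le> N" "1 \<le> N" "1 \<le> k" "0 < \<delta>" "\<delta> < 1"
  defines "r \<equiv> nat \<lceil>real N * ln (1 / \<delta>) / real k\<rceil>"
  shows "1 \<le> r" and "real n * ln (1 / \<delta>) / real k \<le> real r"
proof -
  have "0 < real N * ln (1 / \<delta>) / real k" using assms by simp
  then show "1 \<le> r" unfolding r_def by linarith
  show "real n * ln (1 / \<delta>) / real k \<le> real r"
    unfolding r_def using assms
    by (intro order_trans[OF _ real_nat_ceiling_ge] divide_right_mono mult_right_mono) auto
qed

theorem lemma6:
  fixes A :: "real^'nA^'m" and B :: "real^'nB^'m"
    and S T :: "(real^'m) set" and \<delta> :: real and k :: nat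
  defines "r \<equiv> nat \<lceil>real CARD('nB) * ln (1 / \<delta>) / real k\<rceil>"
  defines "F \<equiv> {R. R \<subseteq> cols B - T \<and> card R = r}"
  assumes unitA: "\<forall>j. norm (column j A) = 1"
    and unitB: "\<forall>j. norm (column j B) = 1"
    and \<delta>: "0 < \<delta>" "\<delta> < 1"
    and ST: "S \<subseteq> cols B" "T \<subseteq> cols B"
    and fST: "fM A S \<ge> fM A T" "fM A S > 0"
    and Sk: "card S \<le> k"
    and r_le: "r \<le> card (cols B - T)"
  shows "(\<Sum>R\<in>F. Max ((\<lambda>v. fM A (T \<union> {v}) - fM A T) ` R)) / real (card F)
           \<ge> (1 - \<delta>) * sigma_min S * (fM A S - fM A T)\<^sup>2 / (4 * real k * fM A S)"
proof -
  define g where "g v = fM A (T \<union> {v}) - fM A T" for v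
  have unit: "norm v \<le> 1" if "v \<in> cols B" for v
    using that unitB unfolding cols_eq_range by auto
  have fin_S: "finite S" using finite_subset[OF ST(1) finite_cols] .
  have "S \<noteq> {}" using fST(2) fM_empty[of A] by auto
  then have "1 \<le> k" using Sk fin_S card_gt_0_iff[of S] by linarith
  have "card (cols B - T) \<le> CARD('nB)"
    using card_mono[OF finite_cols Diff_subset] card_cols_le order_trans by blast
  from nat_ceiling_sample_size[OF this _ \<open>1 \<le> k\<close> \<delta>]
  have "1 \<le> r" and r_ge: "real (card (cols B - T)) * ln (1 / \<delta>) / real k \<le> real r"
    unfolding r_def by (simp_all add: Suc_le_eq)
  have g_nonneg: "0 \<le> g v" if "v \<in> cols B - T" for v
    unfolding g_def using that unit by (intro order_trans[OF sum_nonneg fM_insert_gain_ge]) auto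
  have "sigma_min S * (fM A S - fM A T)\<^sup>2 / (4 * fM A S) \<le> (\<Sum>v\<in>S. g v)"
    unfolding g_def using fin_S unit ST(1) fST by (intro sigma_min_mult_fM_gap_le_sum_gains) auto
  also have "\<dots> = (\<Sum>v\<in>S - T. g v)"
    using fin_S by (intro sum.mono_neutral_right) (auto simp: g_def insert_absorb)
  finally have gap: "sigma_min S * (fM A S - fM A T)\<^sup>2 / (4 * fM A S) \<le> (\<Sum>v\<in>S - T. g v)" .
  have "(1 - \<delta>) * sigma_min S * (fM A S - fM A T)\<^sup>2 / (4 * real k * fM A S)
      = (1 - \<delta>) / real k * (sigma_min S * (fM A S - fM A T)\<^sup>2 / (4 * fM A S))"
    by simp
  also have "\<dots> \<le> (1 - \<delta>) / real k * (\<Sum>v\<in>S - T. g v)"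
    using gap \<delta> by (intro mult_left_mono) auto
  also have "\<dots> \<le> (\<Sum>R\<in>F. Max (g ` R)) / real (card F)"
    unfolding F_def using finite_cols[of B] ST Sk g_nonneg \<open>1 \<le> r\<close> r_le \<delta> r_ge
      card_mono[OF fin_S, of "S - T"]
    by (intro average_Max_subsets_ge) auto
  finally show ?thesis unfolding g_def .
qed

end
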